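(* Let $\kappa>0$, let $x_1=x_1(\kappa)$ be a real differentiable function of $\kappa$, let $a\neq0$, $b$ be real constants, and set $$\Theta=\kappa(x+x_1+4\kappa^2t),\qquad \gamma=x+x_1+\kappa\,\frac{d x_1}{d\kappa}+(12\kappa^2+2a)t+2b .$$ Then, on the set where $2\kappa\gamma-\sin2\Theta\neq0$, the functions $$u=2\partial_x^2\ln(2\kappa\gamma-\sin2\Theta)=\frac{32\kappa^2\sin\Theta(\kappa\gamma\cos\Theta-\sin\Theta)}{(2\kappa\gamma-\sin2\Theta)^2},\qquad \varphi_1=\frac{4\kappa\sqrt a\,\sin\Theta}{2\kappa\gamma-\sin2\Theta}$$ solve the KdV equation with one self-consistent source $$u_t+6uu_x+u_{xxx}+4\varphi_1\varphi_{1,x}=0,\qquad \varphi_{1,xx}+(\kappa^2+u)\varphi_1=0$$ (here $\lambda_1=\kappa^2$ and $\sqrt a$ is any fixed square root of $a$).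
   Context: This is the solution obtained from the generalized binary Darboux transformation applied to $u=0$ with $f=\sin\Theta$ (a solution of $f_{xx}+\kappa^2f=0$, $f_t=4\kappa^2 f_x$) and $e(t)=at+b$. *)

theory Defs
  imports "HOL-Analysis.Analysis"
begin

definition Theta :: "real \<Rightarrow> (real \<Rightarrow> real) \<Rightarrow> real \<Rightarrow> real \<Rightarrow> real" where
  "Theta k x1 x t = k * (x + x1 k + 4 * k^2 * t)"

definition gam :: "real \<Rightarrow> (real \<Rightarrow> real) \<Rightarrow> real \<Rightarrow> real \<Rightarrow> real \<Rightarrow> real \<Rightarrow> real" where
  "gam k x1 a b x t = x + x1 k + k * deriv x1 k + (12 * k^2 + 2 * a) * t + 2 * b"

definition Den :: "real \<Rightarrow> (real \<Rightarrow> real) \<Rightarrow> real \<Rightarrow> real \<Rightarrow> real \<Rightarrow> real \<Rightarrow> real" where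
  "Den k x1 a b x t = 2 * k * gam k x1 a b x t - sin (2 * Theta k x1 x t)"

definition kdv_u :: "real \<Rightarrow> (real \<Rightarrow> real) \<Rightarrow> real \<Rightarrow> real \<Rightarrow> real \<Rightarrow> real \<Rightarrow> real" where
  "kdv_u k x1 a b x t =
     32 * k^2 * sin (Theta k x1 x t) *
       (k * gam k x1 a b x t * cos (Theta k x1 x t) - sin (Theta k x1 x t))
     / (Den k x1 a b x t)^2"

text \<open>phi_1, with sa a fixed (complex) square root of a.\<close>
definition kdv_phi :: "real \<Rightarrow> (real \<Rightarrow> real) \<Rightarrow> real \<Rightarrow> real \<Rightarrow> complex \<Rightarrow> real \<Rightarrow> real \<Rightarrow> complex" where
  "kdv_phi k x1 a b sa x t =
     of_real (4 * k) * sa * of_real (sin (Theta k x1 x t)) / of_real (Den k x1 a b x t)"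

end

theory Submission
  imports Defs
begin

(* Write f = 2 k gamma - sin (2 Theta) for the denominator and h = 4 k sin Theta, so that
   u = 2 (ln f)_xx and phi_1 = sqrt a * h / f.  The x-derivatives of f of order at least two are
   those of -sin (2 Theta), f_x = 4 k sin^2 Theta, and f obeys the linear evolution
   f_t + f_xxx = C with C = 24 k^3 + 4 k a.  Given this evolution, a direct computation gives
     u_t + 6 u u_x + u_xxx + 4 phi_1 phi_1,x = 2 (B / f^2)_x,  B = 3 f_xx^2 - 3 f_x f_xxx - C f_x + a h^2,
     phi_1,xx + (k^2 + u) phi_1 = sqrt a ((h_xx + k^2 h) / f + (h f_xx - 2 f_x h_x) / f^2),
   the Hirota bilinear form of the KdV equation with a self-consistent source.  By the double-angle
   formulas B vanishes identically, and so do h_xx + k^2 h and h f_xx - 2 f_x h_x. *)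

section \<open>Derivatives of logarithms and quotients\<close>

(* log_deriv n takes the values f, f', ..., f^(n) and returns the n-th derivative of ln |f|. *)

definition log_deriv1 :: "real \<Rightarrow> real \<Rightarrow> real" where
  "log_deriv1 f Df = Df / f"

definition log_deriv2 :: "real \<Rightarrow> real \<Rightarrow> real \<Rightarrow> real" where
  "log_deriv2 f Df D2f = (f * D2f - Df^2) / f^2"

definition log_deriv3 :: "real \<Rightarrow> real \<Rightarrow> real \<Rightarrow> real \<Rightarrow> real" where
  "log_deriv3 f Df D2f D3f = (f^2 * D3f - 3 * f * Df * D2f + 2 * Df^3) / f^3"

definition log_deriv4 :: "real \<Rightarrow> real \<Rightarrow> real \<Rightarrow> real \<Rightarrow> real \<Rightarrow> real" where
  "log_deriv4 f Df D2f D3f D4f =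
     (f^3 * D4f - 4 * f^2 * Df * D3f - 3 * f^2 * D2f^2 + 12 * f * Df^2 * D2f - 6 * Df^4) / f^4"

definition log_deriv5 :: "real \<Rightarrow> real \<Rightarrow> real \<Rightarrow> real \<Rightarrow> real \<Rightarrow> real \<Rightarrow> real" where
  "log_deriv5 f Df D2f D3f D4f D5f =
     (f^4 * D5f - 5 * f^3 * Df * D4f - 10 * f^3 * D2f * D3f + 20 * f^2 * Df^2 * D3f
      + 30 * f^2 * Df * D2f^2 - 60 * f * Df^3 * D2f + 24 * Df^5) / f^5"

lemmas power_unfold = power2_eq_square power3_eq_cube power4_eq_xxxx power_numeral_reduce

lemma DERIV_ln_abs:
  assumes "(f has_real_derivative f') (at y)" "f y \<noteq> 0"
  shows "((\<lambda>z. ln \<bar>f z\<bar>) has_real_derivative log_deriv1 (f y) f') (at y)"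
proof -
  have ln_abs: "ln \<bar>f z\<bar> = ln ((f z)^2) / 2" for z
  proof (cases "f z = 0")
    case False
    then have "ln (\<bar>f z\<bar>^2) = 2 * ln \<bar>f z\<bar>"
      by (subst ln_realpow) auto
    then show ?thesis
      by simp
  qed simp
  have "((\<lambda>z. ln ((f z)^2) / 2) has_real_derivative log_deriv1 (f y) f') (at y)"
    using assms unfolding log_deriv1_def
    by (auto intro!: derivative_eq_intros simp: field_simps simp flip: power2_eq_square)
  then show ?thesis
    unfolding ln_abs .
qed

lemma DERIV_log_deriv1:
  assumes "(f has_real_derivative Df y) (at y)" "(Df has_real_derivative D2f y) (at y)" "f y \<noteq> 0"
  shows "((\<lambda>y. log_deriv1 (f y) (Df y)) has_real_derivative log_deriv2 (f y) (Df y) (D2f y)) (at y)"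
  unfolding log_deriv1_def log_deriv2_def
  by (rule derivative_eq_intros assms refl)+ (use assms(3) in \<open>simp_all add: field_simps power2_eq_square\<close>)

lemma DERIV_log_deriv2_general:
  assumes "(f has_real_derivative f_t) (at y)" "(Df has_real_derivative Df_t) (at y)"
    and "(D2f has_real_derivative D2f_t) (at y)" "f y \<noteq> 0"
  shows "((\<lambda>y. log_deriv2 (f y) (Df y) (D2f y)) has_real_derivative
           (f y * D2f_t + f_t * D2f y - 2 * Df y * Df_t) / (f y)^2 - 2 * f_t * log_deriv2 (f y) (Df y) (D2f y) / f y)
         (at y)"
  unfolding log_deriv2_def
  apply (rule derivative_eq_intros assms refl)+
  using assms(4) apply (simp_all add: field_simps)
  apply (simp add: algebra_simps power_unfold)
  done

lemma DERIV_log_deriv2: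
  assumes "(f has_real_derivative Df y) (at y)" "(Df has_real_derivative D2f y) (at y)"
    and "(D2f has_real_derivative D3f y) (at y)" "f y \<noteq> 0"
  shows "((\<lambda>y. log_deriv2 (f y) (Df y) (D2f y)) has_real_derivative
           log_deriv3 (f y) (Df y) (D2f y) (D3f y)) (at y)"
  unfolding log_deriv2_def log_deriv3_def
  apply (rule derivative_eq_intros assms refl)+
  using assms(4) apply (simp_all add: field_simps)
  apply (simp add: algebra_simps power_unfold)
  done

lemma DERIV_log_deriv3:
  assumes "(f has_real_derivative Df y) (at y)" "(Df has_real_derivative D2f y) (at y)"
    and "(D2f has_real_derivative D3f y) (at y)" "(D3f has_real_derivative D4f y) (at y)"
    and "f y \<noteq> 0"
  shows "((\<lambda>y. log_deriv3 (f y) (Df y) (D2f y) (D3f y)) has_real_derivative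
           log_deriv4 (f y) (Df y) (D2f y) (D3f y) (D4f y)) (at y)"
  unfolding log_deriv3_def log_deriv4_def
  apply (rule derivative_eq_intros assms refl)+
  using assms(5) apply (simp_all add: field_simps)
  apply (simp add: algebra_simps power_unfold)
  done

lemma DERIV_log_deriv4:
  assumes "(f has_real_derivative Df y) (at y)" "(Df has_real_derivative D2f y) (at y)"
    and "(D2f has_real_derivative D3f y) (at y)" "(D3f has_real_derivative D4f y) (at y)"
    and "(D4f has_real_derivative D5f y) (at y)" "f y \<noteq> 0"
  shows "((\<lambda>y. log_deriv4 (f y) (Df y) (D2f y) (D3f y) (D4f y)) has_real_derivative
           log_deriv5 (f y) (Df y) (D2f y) (D3f y) (D4f y) (D5f y)) (at y)"
  unfolding log_deriv4_def log_deriv5_def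
  apply (rule derivative_eq_intros assms refl)+
  using assms(6) apply (simp_all add: field_simps)
  apply (simp add: algebra_simps power_unfold)
  done

lemma DERIV_deriv_on_open:
  fixes f g :: "real \<Rightarrow> real"
  assumes "open S" "y \<in> S" "\<And>z. z \<in> S \<Longrightarrow> (f has_real_derivative g z) (at z)"
    and "(g has_real_derivative g') (at y)"
  shows "(deriv f has_real_derivative g') (at y)"
  using assms(4,1,2) by (rule has_field_derivative_transform_within_open) (metis DERIV_imp_deriv assms(3))

lemma deriv_deriv_ln_abs:
  assumes "open S" "x \<in> S" "\<And>y. y \<in> S \<Longrightarrow> f y \<noteq> 0"
    and "\<And>y. y \<in> S \<Longrightarrow> (f has_real_derivative Df y) (at y)"
    and "\<And>y. y \<in> S \<Longrightarrow> (Df has_real_derivative D2f y) (at y)"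
  shows "deriv (deriv (\<lambda>y. ln \<bar>f y\<bar>)) x = log_deriv2 (f x) (Df x) (D2f x)"
proof -
  have "(deriv (\<lambda>y. ln \<bar>f y\<bar>) has_real_derivative log_deriv2 (f x) (Df x) (D2f x)) (at x)"
    using assms
    by (intro DERIV_deriv_on_open[of S x _ "\<lambda>y. log_deriv1 (f y) (Df y)"] DERIV_ln_abs DERIV_log_deriv1) auto
  then show ?thesis
    by (rule DERIV_imp_deriv)
qed

lemma log_deriv2_iterated_derivatives:
  fixes c :: real
  assumes "open S" "x \<in> S" "\<And>y. y \<in> S \<Longrightarrow> f y \<noteq> 0"
    and "\<And>y. y \<in> S \<Longrightarrow> (f has_real_derivative Df y) (at y)"
    and "\<And>y. y \<in> S \<Longrightarrow> (Df has_real_derivative D2f y) (at y)"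
    and "\<And>y. y \<in> S \<Longrightarrow> (D2f has_real_derivative D3f y) (at y)"
    and "\<And>y. y \<in> S \<Longrightarrow> (D3f has_real_derivative D4f y) (at y)"
    and "\<And>y. y \<in> S \<Longrightarrow> (D4f has_real_derivative D5f y) (at y)"
  defines "u \<equiv> \<lambda>y. c * log_deriv2 (f y) (Df y) (D2f y)"
  shows "(u has_real_derivative c * log_deriv3 (f x) (Df x) (D2f x) (D3f x)) (at x)"
    and "(deriv u has_real_derivative c * log_deriv4 (f x) (Df x) (D2f x) (D3f x) (D4f x)) (at x)"
    and "(deriv (deriv u) has_real_derivative c * log_deriv5 (f x) (Df x) (D2f x) (D3f x) (D4f x) (D5f x)) (at x)"
proof -
  have u': "(u has_real_derivative c * log_deriv3 (f y) (Df y) (D2f y) (D3f y)) (at y)" if "y \<in> S" for y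
    unfolding u_def using that assms by (intro DERIV_cmult DERIV_log_deriv2) auto
  have u'': "(deriv u has_real_derivative c * log_deriv4 (f y) (Df y) (D2f y) (D3f y) (D4f y)) (at y)"
    if "y \<in> S" for y
    using that assms by (intro DERIV_deriv_on_open[OF \<open>open S\<close> _ u'] DERIV_cmult DERIV_log_deriv3) auto
  have "(deriv (deriv u) has_real_derivative c * log_deriv5 (f x) (Df x) (D2f x) (D3f x) (D4f x) (D5f x)) (at x)"
    using assms by (intro DERIV_deriv_on_open[OF \<open>open S\<close> _ u''] DERIV_cmult DERIV_log_deriv4) auto
  with u' u'' \<open>x \<in> S\<close> show "(u has_real_derivative c * log_deriv3 (f x) (Df x) (D2f x) (D3f x)) (at x)"
    and "(deriv u has_real_derivative c * log_deriv4 (f x) (Df x) (D2f x) (D3f x) (D4f x)) (at x)"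
    and "(deriv (deriv u) has_real_derivative c * log_deriv5 (f x) (Df x) (D2f x) (D3f x) (D4f x) (D5f x)) (at x)"
    by auto
qed

lemma vector_derivatives_mult_of_real:
  fixes c :: complex and g :: "real \<Rightarrow> real"
  assumes "open S" "x \<in> S" "\<And>y. y \<in> S \<Longrightarrow> (g has_real_derivative Dg y) (at y)"
    and "(Dg has_real_derivative D2g) (at x)"
  shows "((\<lambda>y. c * of_real (g y)) has_vector_derivative c * of_real (Dg x)) (at x)"
    and "((\<lambda>y. vector_derivative (\<lambda>z. c * of_real (g z)) (at y)) has_vector_derivative c * of_real D2g) (at x)"
proof -
  have first_derivative: "((\<lambda>y. c * of_real (g y)) has_vector_derivative c * of_real (Dg y)) (at y)"
    if "y \<in> S" for y
    using assms(3)[OF that] by (intro has_vector_derivative_mult_right has_vector_derivative_of_real)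
  then show "((\<lambda>y. c * of_real (g y)) has_vector_derivative c * of_real (Dg x)) (at x)"
    using assms(2) .
  show "((\<lambda>y. vector_derivative (\<lambda>z. c * of_real (g z)) (at y)) has_vector_derivative c * of_real D2g) (at x)"
    using has_vector_derivative_mult_right[OF has_vector_derivative_of_real[OF assms(4)]] assms(1,2)
    by (rule has_vector_derivative_transform_within_open) (metis vector_derivative_at first_derivative)
qed

lemma quotient_iterated_derivatives:
  assumes "open S" "x \<in> S" "\<And>y. y \<in> S \<Longrightarrow> f y \<noteq> 0"
    and "\<And>y. y \<in> S \<Longrightarrow> (f has_real_derivative Df y) (at y)"
    and "\<And>y. y \<in> S \<Longrightarrow> (Df has_real_derivative D2f y) (at y)"
    and "\<And>y. y \<in> S \<Longrightarrow> (h has_real_derivative Dh y) (at y)"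
    and "\<And>y. y \<in> S \<Longrightarrow> (Dh has_real_derivative D2h y) (at y)"
  shows "\<And>y. y \<in> S \<Longrightarrow> ((\<lambda>y. h y / f y) has_real_derivative (Dh y * f y - h y * Df y) / (f y)^2) (at y)"
    and "((\<lambda>y. (Dh y * f y - h y * Df y) / (f y)^2) has_real_derivative
           (D2h x * f x - h x * D2f x) / (f x)^2 - 2 * Df x * (Dh x * f x - h x * Df x) / (f x)^3) (at x)"
proof -
  fix y
  assume "y \<in> S"
  with assms show "((\<lambda>y. h y / f y) has_real_derivative (Dh y * f y - h y * Df y) / (f y)^2) (at y)"
    by (auto intro!: derivative_eq_intros simp: field_simps simp flip: power2_eq_square)
next
  show "((\<lambda>y. (Dh y * f y - h y * Df y) / (f y)^2) has_real_derivative
           (D2h x * f x - h x * D2f x) / (f x)^2 - 2 * Df x * (Dh x * f x - h x * Df x) / (f x)^3) (at x)"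
    apply (rule derivative_eq_intros refl assms(4-7)[OF assms(2)])+
    using assms(3)[OF assms(2)] apply (simp_all add: field_simps)
    apply (simp add: algebra_simps power_unfold)
    done
qed

lemma kdv_residual_eq:
  fixes f Df D2f D3f D4f D5f f_t Df_t D2f_t h Dh C a :: real
  assumes "f \<noteq> 0" "f_t = C - D3f" "Df_t = - D4f" "D2f_t = - D5f"
  shows "2 * ((f * D2f_t + f_t * D2f - 2 * Df * Df_t) / f^2 - 2 * f_t * log_deriv2 f Df D2f / f)
         + 6 * (2 * log_deriv2 f Df D2f) * (2 * log_deriv3 f Df D2f D3f) + 2 * log_deriv5 f Df D2f D3f D4f D5f
         + 4 * a * (h / f) * ((Dh * f - h * Df) / f^2)
       = 2 * (f * (3 * D2f * D3f - 3 * Df * D4f - C * D2f + 2 * a * h * Dh)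
              - 2 * Df * (3 * D2f^2 - 3 * Df * D3f - C * Df + a * h^2)) / f^3"
  using assms unfolding log_deriv2_def log_deriv3_def log_deriv5_def
  by (simp add: field_simps) algebra

lemma schroedinger_residual_eq:
  fixes f Df D2f h Dh D2h l :: real
  assumes "f \<noteq> 0"
  shows "((D2h * f - h * D2f) / f^2 - 2 * Df * (Dh * f - h * Df) / f^3) + (l + 2 * log_deriv2 f Df D2f) * (h / f)
       = (D2h + l * h) / f + (h * D2f - 2 * Df * Dh) / f^2"
  using assms unfolding log_deriv2_def
  by (simp add: field_simps) algebra

section \<open>The denominator\<close>

definition Den_x :: "real \<Rightarrow> (real \<Rightarrow> real) \<Rightarrow> real \<Rightarrow> real \<Rightarrow> real" where
  "Den_x k x1 x t = 2 * k * (1 - cos (2 * Theta k x1 x t))"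

definition Den_xx :: "real \<Rightarrow> (real \<Rightarrow> real) \<Rightarrow> real \<Rightarrow> real \<Rightarrow> real" where
  "Den_xx k x1 x t = 4 * k^2 * sin (2 * Theta k x1 x t)"

definition Den_xxx :: "real \<Rightarrow> (real \<Rightarrow> real) \<Rightarrow> real \<Rightarrow> real \<Rightarrow> real" where
  "Den_xxx k x1 x t = 8 * k^3 * cos (2 * Theta k x1 x t)"

lemma Theta_derivatives:
  shows "((\<lambda>y. Theta k x1 y t) has_real_derivative k) (at y)"
    and "((\<lambda>s. Theta k x1 x s) has_real_derivative 4 * k^3) (at s)"
  unfolding Theta_def by (auto intro!: derivative_eq_intros simp: power_unfold)

lemma gam_derivatives:
  shows "((\<lambda>y. gam k x1 a b y t) has_real_derivative 1) (at y)"
    and "((\<lambda>s. gam k x1 a b x s) has_real_derivative 12 * k^2 + 2 * a) (at s)"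
  unfolding gam_def by (auto intro!: derivative_eq_intros)

lemma Den_x_derivatives:
  shows "((\<lambda>y. Den k x1 a b y t) has_real_derivative Den_x k x1 y t) (at y)"
    and "((\<lambda>y. Den_x k x1 y t) has_real_derivative Den_xx k x1 y t) (at y)"
    and "((\<lambda>y. Den_xx k x1 y t) has_real_derivative Den_xxx k x1 y t) (at y)"
    and "((\<lambda>y. Den_xxx k x1 y t) has_real_derivative - 4 * k^2 * Den_xx k x1 y t) (at y)"
    and "((\<lambda>y. - 4 * k^2 * Den_xx k x1 y t) has_real_derivative - 4 * k^2 * Den_xxx k x1 y t) (at y)"
  unfolding Den_def Den_x_def Den_xx_def Den_xxx_def
  by (auto intro!: derivative_eq_intros Theta_derivatives gam_derivatives simp: algebra_simps power_unfold)

lemma Den_t_derivatives: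
  shows "((\<lambda>s. Den k x1 a b x s) has_real_derivative 24 * k^3 + 4 * k * a - Den_xxx k x1 x s) (at s)"
    and "((\<lambda>s. Den_x k x1 x s) has_real_derivative 4 * k^2 * Den_xx k x1 x s) (at s)"
    and "((\<lambda>s. Den_xx k x1 x s) has_real_derivative 4 * k^2 * Den_xxx k x1 x s) (at s)"
  unfolding Den_def Den_x_def Den_xx_def Den_xxx_def
  by (auto intro!: derivative_eq_intros Theta_derivatives gam_derivatives simp: algebra_simps power_unfold)

lemma sin_Theta_x_derivatives:
  shows "((\<lambda>y. 4 * k * sin (Theta k x1 y t)) has_real_derivative 4 * k^2 * cos (Theta k x1 y t)) (at y)"
    and "((\<lambda>y. 4 * k^2 * cos (Theta k x1 y t)) has_real_derivative - (k^2 * (4 * k * sin (Theta k x1 y t)))) (at y)"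
  by (auto intro!: derivative_eq_intros Theta_derivatives simp: power_unfold)

lemma open_Den_nonzero: "open {y. Den k x1 a b y t \<noteq> 0}"
  unfolding Den_def gam_def Theta_def by (intro open_Collect_neq continuous_intros)

lemma kdv_u_eq_log_deriv2:
  "kdv_u k x1 a b = (\<lambda>x t. 2 * log_deriv2 (Den k x1 a b x t) (Den_x k x1 x t) (Den_xx k x1 x t))"
proof (intro ext)
  fix x t
  define s c where "s = sin (Theta k x1 x t)" and "c = cos (Theta k x1 x t)"
  have "s^2 + c^2 = 1"
    unfolding s_def c_def by simp
  then have "32 * k^2 * s * (k * gam k x1 a b x t * c - s)
      = 2 * (Den k x1 a b x t * Den_xx k x1 x t - (Den_x k x1 x t)^2)"
    unfolding Den_def Den_x_def Den_xx_def sin_double cos_double_sin s_def[symmetric] c_def[symmetric]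
    by algebra
  then show "kdv_u k x1 a b x t = 2 * log_deriv2 (Den k x1 a b x t) (Den_x k x1 x t) (Den_xx k x1 x t)"
    unfolding kdv_u_def log_deriv2_def s_def c_def by simp
qed

lemma Den_bilinear_identities:
  fixes k a x t :: real and x1 :: "real \<Rightarrow> real"
  defines "C \<equiv> 24 * k^3 + 4 * k * a"
    and "Df \<equiv> Den_x k x1 x t" and "D2f \<equiv> Den_xx k x1 x t" and "D3f \<equiv> Den_xxx k x1 x t"
    and "h \<equiv> 4 * k * sin (Theta k x1 x t)" and "Dh \<equiv> 4 * k^2 * cos (Theta k x1 x t)"
  shows "3 * D2f^2 - 3 * Df * D3f - C * Df + a * h^2 = 0"
    and "3 * D2f * D3f - 3 * Df * (- 4 * k^2 * D2f) - C * D2f + 2 * a * h * Dh = 0"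
    and "h * D2f - 2 * Df * Dh = 0"
proof -
  define s c where "s = sin (Theta k x1 x t)" and "c = cos (Theta k x1 x t)"
  have pyth: "s^2 + c^2 = 1"
    unfolding s_def c_def by simp
  note defs = assms Den_x_def Den_xx_def Den_xxx_def sin_double cos_double_sin s_def[symmetric] c_def[symmetric]
  show "3 * D2f^2 - 3 * Df * D3f - C * Df + a * h^2 = 0"
    using pyth unfolding defs by algebra
  show "3 * D2f * D3f - 3 * Df * (- 4 * k^2 * D2f) - C * D2f + 2 * a * h * Dh = 0"
    unfolding defs by (simp add: algebra_simps power_unfold)
  show "h * D2f - 2 * Df * Dh = 0"
    unfolding defs by (simp add: algebra_simps power_unfold)
qed

section \<open>The solution and its derivatives\<close>

definition kdv_psi :: "real \<Rightarrow> (real \<Rightarrow> real) \<Rightarrow> real \<Rightarrow> real \<Rightarrow> real \<Rightarrow> real \<Rightarrow> real" where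
  "kdv_psi k x1 a b x t = 4 * k * sin (Theta k x1 x t) / Den k x1 a b x t"

lemma kdv_phi_eq: "kdv_phi k x1 a b sa = (\<lambda>x t. sa * of_real (kdv_psi k x1 a b x t))"
  unfolding kdv_phi_def kdv_psi_def by (simp add: fun_eq_iff)

definition kdv_psi_x :: "real \<Rightarrow> (real \<Rightarrow> real) \<Rightarrow> real \<Rightarrow> real \<Rightarrow> real \<Rightarrow> real \<Rightarrow> real" where
  "kdv_psi_x k x1 a b x t =
     (let f = Den k x1 a b x t; Df = Den_x k x1 x t;
          h = 4 * k * sin (Theta k x1 x t); Dh = 4 * k^2 * cos (Theta k x1 x t)
      in (Dh * f - h * Df) / f^2)"

definition kdv_psi_xx :: "real \<Rightarrow> (real \<Rightarrow> real) \<Rightarrow> real \<Rightarrow> real \<Rightarrow> real \<Rightarrow> real \<Rightarrow> real" where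
  "kdv_psi_xx k x1 a b x t =
     (let f = Den k x1 a b x t; Df = Den_x k x1 x t; D2f = Den_xx k x1 x t;
          h = 4 * k * sin (Theta k x1 x t); Dh = 4 * k^2 * cos (Theta k x1 x t); D2h = - (k^2 * h)
      in (D2h * f - h * D2f) / f^2 - 2 * Df * (Dh * f - h * Df) / f^3)"

definition kdv_u_x :: "real \<Rightarrow> (real \<Rightarrow> real) \<Rightarrow> real \<Rightarrow> real \<Rightarrow> real \<Rightarrow> real \<Rightarrow> real" where
  "kdv_u_x k x1 a b x t =
     2 * log_deriv3 (Den k x1 a b x t) (Den_x k x1 x t) (Den_xx k x1 x t) (Den_xxx k x1 x t)"

definition kdv_u_xx :: "real \<Rightarrow> (real \<Rightarrow> real) \<Rightarrow> real \<Rightarrow> real \<Rightarrow> real \<Rightarrow> real \<Rightarrow> real" where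
  "kdv_u_xx k x1 a b x t =
     2 * log_deriv4 (Den k x1 a b x t) (Den_x k x1 x t) (Den_xx k x1 x t) (Den_xxx k x1 x t)
           (- 4 * k^2 * Den_xx k x1 x t)"

definition kdv_u_xxx :: "real \<Rightarrow> (real \<Rightarrow> real) \<Rightarrow> real \<Rightarrow> real \<Rightarrow> real \<Rightarrow> real \<Rightarrow> real" where
  "kdv_u_xxx k x1 a b x t =
     2 * log_deriv5 (Den k x1 a b x t) (Den_x k x1 x t) (Den_xx k x1 x t) (Den_xxx k x1 x t)
           (- 4 * k^2 * Den_xx k x1 x t) (- 4 * k^2 * Den_xxx k x1 x t)"

definition kdv_u_t :: "real \<Rightarrow> (real \<Rightarrow> real) \<Rightarrow> real \<Rightarrow> real \<Rightarrow> real \<Rightarrow> real \<Rightarrow> real" where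
  "kdv_u_t k x1 a b x t =
     (let f = Den k x1 a b x t; Df = Den_x k x1 x t; D2f = Den_xx k x1 x t; D3f = Den_xxx k x1 x t;
          f_t = 24 * k^3 + 4 * k * a - D3f
      in 2 * ((f * (4 * k^2 * D3f) + f_t * D2f - 2 * Df * (4 * k^2 * D2f)) / f^2
              - 2 * f_t * log_deriv2 f Df D2f / f))"

lemma kdv_u_x_derivatives:
  assumes "Den k x1 a b x t \<noteq> 0"
  shows "((\<lambda>y. kdv_u k x1 a b y t) has_real_derivative kdv_u_x k x1 a b x t) (at x)"
    and "(deriv (\<lambda>y. kdv_u k x1 a b y t) has_real_derivative kdv_u_xx k x1 a b x t) (at x)"
    and "(deriv (deriv (\<lambda>y. kdv_u k x1 a b y t)) has_real_derivative kdv_u_xxx k x1 a b x t) (at x)"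
  using log_deriv2_iterated_derivatives[where c = 2 and f = "\<lambda>y. Den k x1 a b y t"
      and Df = "\<lambda>y. Den_x k x1 y t" and D2f = "\<lambda>y. Den_xx k x1 y t" and D3f = "\<lambda>y. Den_xxx k x1 y t"
      and D4f = "\<lambda>y. - 4 * k^2 * Den_xx k x1 y t" and D5f = "\<lambda>y. - 4 * k^2 * Den_xxx k x1 y t",
      OF open_Den_nonzero _ _ Den_x_derivatives] assms
  unfolding kdv_u_eq_log_deriv2 kdv_u_x_def kdv_u_xx_def kdv_u_xxx_def by auto

lemma kdv_u_t_derivative:
  assumes "Den k x1 a b x t \<noteq> 0"
  shows "((\<lambda>s. kdv_u k x1 a b x s) has_real_derivative kdv_u_t k x1 a b x t) (at t)"
  unfolding kdv_u_eq_log_deriv2 kdv_u_t_def Let_def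
  using assms by (intro DERIV_cmult DERIV_log_deriv2_general Den_t_derivatives)

lemma kdv_phi_x_derivatives:
  assumes "Den k x1 a b x t \<noteq> 0"
  shows "((\<lambda>y. kdv_phi k x1 a b sa y t) has_vector_derivative sa * of_real (kdv_psi_x k x1 a b x t)) (at x)"
    and "((\<lambda>y. vector_derivative (\<lambda>z. kdv_phi k x1 a b sa z t) (at y)) has_vector_derivative
           sa * of_real (kdv_psi_xx k x1 a b x t)) (at x)"
proof -
  have S: "open {y. Den k x1 a b y t \<noteq> 0}" "x \<in> {y. Den k x1 a b y t \<noteq> 0}"
    using open_Den_nonzero assms by auto
  note psi = quotient_iterated_derivatives[where f = "\<lambda>y. Den k x1 a b y t"
      and Df = "\<lambda>y. Den_x k x1 y t" and D2f = "\<lambda>y. Den_xx k x1 y t"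
      and h = "\<lambda>y. 4 * k * sin (Theta k x1 y t)" and Dh = "\<lambda>y. 4 * k^2 * cos (Theta k x1 y t)"
      and D2h = "\<lambda>y. - (k^2 * (4 * k * sin (Theta k x1 y t)))",
      OF S _ Den_x_derivatives(1,2) sin_Theta_x_derivatives]
  have "(\<lambda>y. kdv_phi k x1 a b sa y t) = (\<lambda>y. sa * of_real (kdv_psi k x1 a b y t))"
    unfolding kdv_phi_eq ..
  moreover note vector_derivatives_mult_of_real[where g = "\<lambda>y. kdv_psi k x1 a b y t"
      and Dg = "\<lambda>y. kdv_psi_x k x1 a b y t" and D2g = "kdv_psi_xx k x1 a b x t" and c = sa, OF S]
  ultimately show "((\<lambda>y. kdv_phi k x1 a b sa y t) has_vector_derivative sa * of_real (kdv_psi_x k x1 a b x t)) (at x)"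
    and "((\<lambda>y. vector_derivative (\<lambda>z. kdv_phi k x1 a b sa z t) (at y)) has_vector_derivative
           sa * of_real (kdv_psi_xx k x1 a b x t)) (at x)"
    using psi unfolding kdv_psi_def kdv_psi_x_def kdv_psi_xx_def Let_def by auto
qed

lemma kdv_u_eq_deriv_deriv_ln:
  assumes "Den k x1 a b x t \<noteq> 0"
  shows "kdv_u k x1 a b x t = 2 * deriv (deriv (\<lambda>y. ln \<bar>Den k x1 a b y t\<bar>)) x"
  using deriv_deriv_ln_abs[where f = "\<lambda>y. Den k x1 a b y t" and Df = "\<lambda>y. Den_x k x1 y t"
      and D2f = "\<lambda>y. Den_xx k x1 y t", OF open_Den_nonzero _ _ Den_x_derivatives(1,2)] assms
  unfolding kdv_u_eq_log_deriv2 by simp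

lemma kdv_equation_jets:
  assumes "Den k x1 a b x t \<noteq> 0"
  shows "kdv_u_t k x1 a b x t + 6 * kdv_u k x1 a b x t * kdv_u_x k x1 a b x t + kdv_u_xxx k x1 a b x t
         + 4 * a * kdv_psi k x1 a b x t * kdv_psi_x k x1 a b x t = 0"
  unfolding kdv_u_t_def kdv_u_eq_log_deriv2 kdv_u_x_def kdv_u_xxx_def kdv_psi_def kdv_psi_x_def Let_def
  using assms Den_bilinear_identities(1,2)[of k x1 x t a]
  by (subst kdv_residual_eq[where C = "24 * k^3 + 4 * k * a"]) simp_all

lemma schroedinger_equation_jets:
  assumes "Den k x1 a b x t \<noteq> 0"
  shows "kdv_psi_xx k x1 a b x t + (k^2 + kdv_u k x1 a b x t) * kdv_psi k x1 a b x t = 0"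
  using schroedinger_residual_eq[OF assms, where l = "k^2" and h = "4 * k * sin (Theta k x1 x t)"
      and Dh = "4 * k^2 * cos (Theta k x1 x t)" and D2h = "- (k^2 * (4 * k * sin (Theta k x1 x t)))"
      and Df = "Den_x k x1 x t" and D2f = "Den_xx k x1 x t"]
    Den_bilinear_identities(3)[of k x1 x t]
  unfolding kdv_psi_xx_def kdv_u_eq_log_deriv2 kdv_psi_def Let_def by simp

lemma kdv_equation_with_source:
  assumes "Den k x1 a b x t \<noteq> 0" and "sa ^ 2 = complex_of_real a"
  defines "U \<equiv> kdv_u k x1 a b" and "P \<equiv> kdv_phi k x1 a b sa"
  shows "complex_of_real
           (deriv (\<lambda>s. U x s) t + 6 * U x t * deriv (\<lambda>y. U y t) x + deriv (deriv (deriv (\<lambda>w. U w t))) x)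
         + 4 * P x t * vector_derivative (\<lambda>y. P y t) (at x) = 0"
proof -
  note u_x = kdv_u_x_derivatives[OF assms(1)]
  have P_eq: "P x t = sa * of_real (kdv_psi k x1 a b x t)"
    unfolding P_def kdv_phi_eq ..
  have sa_mult: "sa * of_real p * (sa * of_real q) = of_real (a * p * q)" for p q
    using assms(2) by (simp add: power2_eq_square mult_ac)
  have "complex_of_real
          (deriv (\<lambda>s. U x s) t + 6 * U x t * deriv (\<lambda>y. U y t) x + deriv (deriv (deriv (\<lambda>w. U w t))) x)
        + 4 * P x t * vector_derivative (\<lambda>y. P y t) (at x)
      = of_real (kdv_u_t k x1 a b x t + 6 * kdv_u k x1 a b x t * kdv_u_x k x1 a b x t
          + kdv_u_xxx k x1 a b x t + 4 * a * kdv_psi k x1 a b x t * kdv_psi_x k x1 a b x t)"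
    unfolding P_eq U_def DERIV_imp_deriv[OF kdv_u_t_derivative[OF assms(1)]]
      DERIV_imp_deriv[OF u_x(1)] DERIV_imp_deriv[OF u_x(3)]
      vector_derivative_at[OF kdv_phi_x_derivatives(1)[OF assms(1), of sa, folded P_def]] mult.assoc[of 4] sa_mult
    by simp
  then show ?thesis
    using kdv_equation_jets[OF assms(1)] by simp
qed

lemma schroedinger_equation:
  fixes sa :: complex
  assumes "Den k x1 a b x t \<noteq> 0"
  defines "U \<equiv> kdv_u k x1 a b" and "P \<equiv> kdv_phi k x1 a b sa"
  shows "vector_derivative (\<lambda>y. vector_derivative (\<lambda>z. P z t) (at y)) (at x)
         + complex_of_real (k^2 + U x t) * P x t = 0"
proof -
  have "vector_derivative (\<lambda>y. vector_derivative (\<lambda>z. P z t) (at y)) (at x)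
          + complex_of_real (k^2 + U x t) * P x t
      = sa * of_real (kdv_psi_xx k x1 a b x t + (k^2 + kdv_u k x1 a b x t) * kdv_psi k x1 a b x t)"
    unfolding vector_derivative_at[OF kdv_phi_x_derivatives(2)[OF assms(1), of sa, folded P_def]]
    unfolding P_def U_def kdv_phi_eq
    by (simp add: algebra_simps)
  then show ?thesis
    using schroedinger_equation_jets[OF assms(1)] by simp
qed

theorem mainTheorem3:
  fixes k a b :: real and x1 :: "real \<Rightarrow> real" and sa :: complex
  assumes "k > 0"
    and "x1 differentiable (at k)"
    and "a \<noteq> 0"
    and "sa ^ 2 = complex_of_real a"
  defines "U \<equiv> kdv_u k x1 a b" and "P \<equiv> kdv_phi k x1 a b sa"
  shows "\<forall>x t. Den k x1 a b x t \<noteq> 0 \<longrightarrow>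
     U x t = 2 * deriv (\<lambda>y. deriv (\<lambda>z. ln \<bar>Den k x1 a b z t\<bar>) y) x
   \<and> (\<lambda>s. U x s) differentiable (at t)
   \<and> (\<lambda>y. U y t) differentiable (at x)
   \<and> (\<lambda>y. deriv (\<lambda>z. U z t) y) differentiable (at x)
   \<and> (\<lambda>y. deriv (\<lambda>z. deriv (\<lambda>w. U w t) z) y) differentiable (at x)
   \<and> (\<lambda>y. P y t) differentiable (at x)
   \<and> (\<lambda>y. vector_derivative (\<lambda>z. P z t) (at y)) differentiable (at x)
   \<and> complex_of_real
        (deriv (\<lambda>s. U x s) t + 6 * U x t * deriv (\<lambda>y. U y t) x
         + deriv (\<lambda>y. deriv (\<lambda>z. deriv (\<lambda>w. U w t) z) y) x)
      + 4 * P x t * vector_derivative (\<lambda>y. P y t) (at x) = 0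
   \<and> vector_derivative (\<lambda>y. vector_derivative (\<lambda>z. P z t) (at y)) (at x)
      + complex_of_real (k^2 + U x t) * P x t = 0"
  apply (intro allI impI)
  subgoal premises Den_nonzero for x t
    using kdv_u_eq_deriv_deriv_ln[OF Den_nonzero] kdv_u_t_derivative[OF Den_nonzero]
      kdv_u_x_derivatives[OF Den_nonzero] kdv_phi_x_derivatives[OF Den_nonzero]
      kdv_equation_with_source[OF Den_nonzero assms(4)] schroedinger_equation[OF Den_nonzero]
    unfolding U_def P_def
    by (blast intro: differentiableI has_field_derivative_imp_has_derivative differentiableI_vector)
  done

end
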